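(* Let $\Omega=[\alpha,\beta]$ with $\alpha<\beta$, let $F$ be an $\Omega$-tropical polynomial with set of non-smooth points $H\subset(\alpha,\beta)$ and multiplicity function $\mu$, let $p\in(\alpha,\beta)\setminus H$, and let $(a,b)$ be the connected component of $(\alpha,\beta)\setminus H$ containing $p$ (so each of $a,b$ is either a point of $H$ or an endpoint of $\Omega$). Put $c=\min(p-a,\,b-p)$. Then $G_pF$ is an $\Omega$-tropical polynomial, and its multiset of non-smooth points (points counted with multiplicity) is obtained from that of $F$ by removing one copy of $a$ if $a\neq\alpha$, removing one copy of $b$ if $b\neq\beta$, and adding one copy of $a+c$ and one copy of $b-c$ (so that if $a+c=b-c$, i.e. $p=(a+b)/2$, a point $p$ of multiplicity $2$ is added). Equivalently, with $M_F:\Omega\to\mathbb{Z}_{\ge0}\cup\{\infty\}$ defined by $M_F(\alpha)=M_F(\beta)=\infty$, $M_F=\mu$ on $H$ and $M_F=0$ on $(\alpha,\beta)\setminus H$, one has $M_{G_pF}(x)=M_F(x)-\delta_{a,x}-\delta_{b,x}+\delta_{a+c,x}+\delta_{b-c,x}$ for all $x\in\Omega$ (Kronecker deltas, with $\infty-1=\infty$).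
   Context: Let $\Omega=[\alpha,\beta]$ be a compact interval with $\alpha<\beta$. An $\Omega$-tropical series is a function $F:\Omega\to[0,\infty)$ with $F(\alpha)=F(\beta)=0$ that can be written as $F(z)=\inf_{v\in\mathbb{Z}}(a_v+zv)$ for some real numbers $a_v$; its canonical coefficients are $a_v=\sup_{z\in\Omega}(F(z)-zv)$. Such $F$ is concave piecewise linear with integer slopes; its set $H$ of non-smooth points is the set of points of $(\alpha,\beta)$ where $F$ is not differentiable, with multiplicity $\mu(h)=F'(h^-)-F'(h^+)\in\mathbb{Z}_{\ge1}$. An $\Omega$-tropical polynomial is an $\Omega$-tropical series with finite $H$. For $p\in(\alpha,\beta)$ the operator $G_p$ is defined as follows: if $F$ is not differentiable at $p$, then $G_pF=F$; otherwise there is a unique $w\in\mathbb{Z}$ with $F(z)=a_w+zw$ near $p$ ($a_v$ canonical coefficients of $F$), and $G_pF(z)=\inf_{v\in\mathbb{Z}}(b_v+zv)$ for $z\in\Omega$, where $b_v=a_v$ for $v\neq w$ and $b_w=\min_{v\in\mathbb{Z}\setminus\{w\}}(a_v+pv)-pw$. *)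

theory Defs
  imports "HOL-Analysis.Analysis"
begin

text \<open>Functions are of type real => real; only their values on Omega = [alpha, beta] matter.\<close>

definition is_inf_int :: "real \<Rightarrow> (int \<Rightarrow> real) \<Rightarrow> bool" where
  "is_inf_int y g \<longleftrightarrow> (\<forall>v. y \<le> g v) \<and> (\<forall>y'. (\<forall>v. y' \<le> g v) \<longrightarrow> y' \<le> y)"

definition trop_series :: "real \<Rightarrow> real \<Rightarrow> (real \<Rightarrow> real) \<Rightarrow> bool" where
  "trop_series \<alpha> \<beta> F \<longleftrightarrow>
     (\<forall>z\<in>{\<alpha>..\<beta>}. 0 \<le> F z) \<and> F \<alpha> = 0 \<and> F \<beta> = 0 \<and>
     (\<exists>a :: int \<Rightarrow> real. \<forall>z\<in>{\<alpha>..\<beta>}. is_inf_int (F z) (\<lambda>v. a v + z * of_int v))"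

definition canon_coeff :: "real \<Rightarrow> real \<Rightarrow> (real \<Rightarrow> real) \<Rightarrow> int \<Rightarrow> real" where
  "canon_coeff \<alpha> \<beta> F v = Sup ((\<lambda>z. F z - z * of_int v) ` {\<alpha>..\<beta>})"

definition nonsmooth :: "real \<Rightarrow> real \<Rightarrow> (real \<Rightarrow> real) \<Rightarrow> real set" where
  "nonsmooth \<alpha> \<beta> F = {z \<in> {\<alpha><..<\<beta>}. \<not> F differentiable (at z)}"

definition trop_poly :: "real \<Rightarrow> real \<Rightarrow> (real \<Rightarrow> real) \<Rightarrow> bool" where
  "trop_poly \<alpha> \<beta> F \<longleftrightarrow> trop_series \<alpha> \<beta> F \<and> finite (nonsmooth \<alpha> \<beta> F)"

definition mult :: "(real \<Rightarrow> real) \<Rightarrow> real \<Rightarrow> real" where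
  "mult F h = (THE d. (F has_real_derivative d) (at_left h))
             - (THE d. (F has_real_derivative d) (at_right h))"

definition Mfun :: "real \<Rightarrow> real \<Rightarrow> (real \<Rightarrow> real) \<Rightarrow> real \<Rightarrow> ereal" where
  "Mfun \<alpha> \<beta> F x =
     (if x = \<alpha> \<or> x = \<beta> then \<infinity>
      else if x \<in> nonsmooth \<alpha> \<beta> F then ereal (mult F x) else 0)"

definition Gop :: "real \<Rightarrow> real \<Rightarrow> real \<Rightarrow> (real \<Rightarrow> real) \<Rightarrow> (real \<Rightarrow> real)" where
  "Gop \<alpha> \<beta> p F =
     (if \<not> F differentiable (at p) then F
      else
        (let a = canon_coeff \<alpha> \<beta> F;
             w = (THE w :: int. \<exists>\<epsilon>>0. \<forall>z. \<bar>z - p\<bar> < \<epsilon> \<longrightarrow> F z = a w + z * of_int w);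
             b = (\<lambda>v. if v = w
                       then Inf ((\<lambda>u. a u + p * of_int u) ` (UNIV - {w})) - p * of_int w
                       else a v)
         in (\<lambda>z. Inf (range (\<lambda>v. b v + z * of_int v)))))"

end

theory Submission
  imports Defs
begin

text \<open>
  Near every interior point a tropical series coincides with the minimum of finitely many of its
  canonical affine terms, so it is affine on each side of the point: the left slope is the largest
  and the right slope the smallest slope supporting F there, and smoothness and the multiplicity
  are read off from the jump between them.

  On the smooth component (a, b) containing p, F is affine with some slope w. Because a is a kink
  of F or the left end of \<Omega>, the slope w + 1 still supports F at a, and likewise w - 1 supports F
  at b. Hence the infimum at p of the canonical terms of slope other than w is F p + c, so G_p
  raises the coefficient of slope w by exactly c, and G_p F = F + T for the tent T of height c over
  [a, b] with slopes 1, 0, -1. Adding T changes the slope jump by -1 at a and b and by +1 at a + c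
  and b - c.
\<close>

section \<open>One-sided affine germs\<close>

definition left_affine :: "(real \<Rightarrow> real) \<Rightarrow> real \<Rightarrow> real \<Rightarrow> bool" where
  "left_affine f x l \<longleftrightarrow> (\<forall>\<^sub>F z in nhds x. z \<le> x \<longrightarrow> f z = f x + l * (z - x))"

definition right_affine :: "(real \<Rightarrow> real) \<Rightarrow> real \<Rightarrow> real \<Rightarrow> bool" where
  "right_affine f x r \<longleftrightarrow> (\<forall>\<^sub>F z in nhds x. x \<le> z \<longrightarrow> f z = f x + r * (z - x))"

lemma left_affine_has_derivative:
  assumes "left_affine f x l"
  shows "(f has_real_derivative l) (at_left x)"
proof -
  have "\<forall>\<^sub>F z in at x within {..x}. f z = f x + l * (z - x)"
    using assms unfolding left_affine_def eventually_at_filter by (auto elim: eventually_mono)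
  then have "(f has_real_derivative l) (at x within {..x})
      \<longleftrightarrow> ((\<lambda>z. f x + l * (z - x)) has_real_derivative l) (at x within {..x})"
    by (rule has_field_derivative_cong_eventually) simp
  also have "\<dots>" by (auto intro!: derivative_eq_intros)
  finally show ?thesis by (rule DERIV_subset) auto
qed

lemma right_affine_has_derivative:
  assumes "right_affine f x r"
  shows "(f has_real_derivative r) (at_right x)"
proof -
  have "\<forall>\<^sub>F z in at x within {x..}. f z = f x + r * (z - x)"
    using assms unfolding right_affine_def eventually_at_filter by (auto elim: eventually_mono)
  then have "(f has_real_derivative r) (at x within {x..})
      \<longleftrightarrow> ((\<lambda>z. f x + r * (z - x)) has_real_derivative r) (at x within {x..})"
    by (rule has_field_derivative_cong_eventually) simp
  also have "\<dots>" by (auto intro!: derivative_eq_intros)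
  finally show ?thesis by (rule DERIV_subset) auto
qed

lemma left_affine_unique: "left_affine f x l \<Longrightarrow> left_affine f x l' \<Longrightarrow> l = l'"
  by (auto dest!: left_affine_has_derivative intro: has_field_derivative_unique)

lemma right_affine_unique: "right_affine f x r \<Longrightarrow> right_affine f x r' \<Longrightarrow> r = r'"
  by (auto dest!: right_affine_has_derivative intro: has_field_derivative_unique)

lemma mult_eq_slope_jump:
  assumes "left_affine f x l" "right_affine f x r"
  shows "mult f x = l - r"
proof -
  have "(THE d. (f has_real_derivative d) (at_left x)) = l"
    using left_affine_has_derivative[OF assms(1)]
    by (auto intro!: the_equality dest: has_field_derivative_unique)
  moreover have "(THE d. (f has_real_derivative d) (at_right x)) = r"
    using right_affine_has_derivative[OF assms(2)]
    by (auto intro!: the_equality dest: has_field_derivative_unique)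
  ultimately show ?thesis by (simp add: mult_def)
qed

lemma affine_iff_left_right_affine:
  "(\<forall>\<^sub>F z in nhds x. f z = f x + s * (z - x)) \<longleftrightarrow> left_affine f x s \<and> right_affine f x s"
  unfolding left_affine_def right_affine_def eventually_conj_iff[symmetric]
  by (intro eventually_cong always_eventually) auto

lemma has_derivative_of_eventually_affine:
  assumes "\<forall>\<^sub>F z in nhds x. f z = k + z * s"
  shows "(f has_real_derivative s) (at x)"
proof -
  have "((\<lambda>z. k + z * s) has_real_derivative s) (at x)"
    by (auto intro!: derivative_eq_intros)
  then show ?thesis using DERIV_cong_ev[OF refl assms refl] by simp
qed

lemma has_derivative_of_locally_affine:
  assumes "\<forall>\<^sub>F z in nhds x. f z = f x + s * (z - x)"
  shows "(f has_real_derivative s) (at x)"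
  using assms by (intro has_derivative_of_eventually_affine[of f "f x - s * x"])
    (auto elim!: eventually_mono simp: algebra_simps)

lemma differentiable_iff_slopes_eq:
  assumes l: "left_affine f x l" and r: "right_affine f x r"
  shows "f differentiable (at x) \<longleftrightarrow> l = r"
proof
  assume "f differentiable (at x)"
  then obtain d where d: "(f has_real_derivative d) (at x)"
    by (auto simp: real_differentiable_def)
  have "d = l" "d = r"
    using has_field_derivative_unique[OF has_field_derivative_at_within[OF d]]
      left_affine_has_derivative[OF l] right_affine_has_derivative[OF r] by fastforce+
  then show "l = r" by simp
next
  assume "l = r"
  then have "\<forall>\<^sub>F z in nhds x. f z = f x + l * (z - x)"
    using l r by (simp add: affine_iff_left_right_affine)
  then show "f differentiable (at x)"
    by (auto simp: real_differentiable_def dest: has_derivative_of_locally_affine)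
qed

lemma Mfun_eq_slope_jump:
  assumes x: "\<alpha> < x" "x < \<beta>" and l: "left_affine f x l" and r: "right_affine f x r"
  shows "Mfun \<alpha> \<beta> f x = ereal (l - r)"
  using x differentiable_iff_slopes_eq[OF l r] mult_eq_slope_jump[OF l r]
  by (auto simp: Mfun_def nonsmooth_def)

lemma left_affine_add:
  assumes "left_affine f x l" "left_affine g x m"
  shows "left_affine (\<lambda>z. f z + g z) x (l + m)"
  using assms unfolding left_affine_def by eventually_elim (auto simp: algebra_simps)

lemma right_affine_add:
  assumes "right_affine f x r" "right_affine g x m"
  shows "right_affine (\<lambda>z. f z + g z) x (r + m)"
  using assms unfolding right_affine_def by eventually_elim (auto simp: algebra_simps)

lemma left_affine_diff:
  assumes "left_affine f x l" "left_affine g x m"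
  shows "left_affine (\<lambda>z. f z - g z) x (l - m)"
  using assms unfolding left_affine_def by eventually_elim (auto simp: algebra_simps)

lemma right_affine_diff:
  assumes "right_affine f x r" "right_affine g x m"
  shows "right_affine (\<lambda>z. f z - g z) x (r - m)"
  using assms unfolding right_affine_def by eventually_elim (auto simp: algebra_simps)

lemma left_affine_cong:
  assumes "\<forall>\<^sub>F z in nhds x. f z = g z" "left_affine f x l"
  shows "left_affine g x l"
proof -
  have "f x = g x" using assms(1) by (rule eventually_nhds_x_imp_x)
  with assms show ?thesis unfolding left_affine_def by (auto elim: eventually_elim2)
qed

lemma right_affine_cong:
  assumes "\<forall>\<^sub>F z in nhds x. f z = g z" "right_affine f x r"
  shows "right_affine g x r"
proof -
  have "f x = g x" using assms(1) by (rule eventually_nhds_x_imp_x)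
  with assms show ?thesis unfolding right_affine_def by (auto elim: eventually_elim2)
qed

section \<open>The tent function\<close>

definition ramp :: "real \<Rightarrow> real \<Rightarrow> real" where
  "ramp h z = max 0 (z - h)"

lemma left_affine_ramp: "left_affine (ramp h) x (if h < x then 1 else 0)"
proof (cases "h < x")
  case True
  then have "\<forall>\<^sub>F z in nhds x. h < z" using eventually_nhds_in_open[of "{h<..}" x] by simp
  then show ?thesis unfolding left_affine_def by eventually_elim (use True in \<open>simp add: ramp_def\<close>)
qed (auto simp: left_affine_def ramp_def)

lemma right_affine_ramp: "right_affine (ramp h) x (if h \<le> x then 1 else 0)"
proof (cases "h \<le> x")
  case False
  then have "\<forall>\<^sub>F z in nhds x. z < h" using eventually_nhds_in_open[of "{..<h}" x] by simp
  then show ?thesis unfolding right_affine_def by eventually_elim (use False in \<open>simp add: ramp_def\<close>)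
qed (auto simp: right_affine_def ramp_def)

text \<open>A sum of ramps, so that its one-sided slopes are explicit at every point; for
  0 \<le> 2 c \<le> b - a it is the tent of height c over [a, b] (see tent_eq_min).\<close>

definition tent :: "real \<Rightarrow> real \<Rightarrow> real \<Rightarrow> real \<Rightarrow> real" where
  "tent a b c z = ramp a z - ramp (a + c) z - ramp (b - c) z + ramp b z"

lemma tent_slope_jump:
  obtains l r where "left_affine (tent a b c) x l" "right_affine (tent a b c) x r"
    "l - r = - (if a = x then 1 else 0) - (if b = x then 1 else 0)
               + (if a + c = x then 1 else 0) + (if b - c = x then 1 else 0)"
proof
  show "left_affine (tent a b c) x ((if a < x then 1 else 0) - (if a + c < x then 1 else 0)
      - (if b - c < x then 1 else 0) + (if b < x then 1 else 0))"
    unfolding tent_def by (intro left_affine_add left_affine_diff left_affine_ramp)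
  show "right_affine (tent a b c) x ((if a \<le> x then 1 else 0) - (if a + c \<le> x then 1 else 0)
      - (if b - c \<le> x then 1 else 0) + (if b \<le> x then 1 else 0))"
    unfolding tent_def by (intro right_affine_add right_affine_diff right_affine_ramp)
qed auto

lemma tent_eq_min:
  assumes "0 \<le> c" "2 * c \<le> b - a" "a \<le> z" "z \<le> b"
  shows "tent a b c z = min (min (z - a) (b - z)) c"
  using assms by (auto simp: tent_def ramp_def min_def max_def)

lemma tent_outside:
  assumes "0 \<le> c" "2 * c \<le> b - a" "z \<le> a \<or> b \<le> z"
  shows "tent a b c z = 0"
  using assms by (auto simp: tent_def ramp_def max_def)

lemma tent_nonneg:
  assumes "0 \<le> c" "2 * c \<le> b - a"
  shows "0 \<le> tent a b c z"
  using assms by (auto simp: tent_def ramp_def max_def)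

section \<open>Canonical coefficients and supporting slopes\<close>

lemma trop_series_le_canon_coeff:
  assumes ts: "trop_series \<alpha> \<beta> F" and z: "z \<in> {\<alpha>..\<beta>}"
  shows "F z \<le> canon_coeff \<alpha> \<beta> F v + z * of_int v"
proof -
  obtain c where c: "\<And>z. z \<in> {\<alpha>..\<beta>} \<Longrightarrow> is_inf_int (F z) (\<lambda>v. c v + z * of_int v)"
    using ts unfolding trop_series_def by blast
  have "bdd_above ((\<lambda>z. F z - z * of_int v) ` {\<alpha>..\<beta>})"
    using c by (intro bdd_aboveI2[of _ _ "c v"]) (force simp: is_inf_int_def algebra_simps)
  then have "F z - z * of_int v \<le> canon_coeff \<alpha> \<beta> F v"
    unfolding canon_coeff_def by (rule cSup_upper[rotated]) (use z in auto)
  then show ?thesis by simp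
qed

lemma canon_coeff_le:
  assumes "\<alpha> \<le> \<beta>" "\<And>z. z \<in> {\<alpha>..\<beta>} \<Longrightarrow> F z \<le> K + z * of_int v"
  shows "canon_coeff \<alpha> \<beta> F v \<le> K"
  unfolding canon_coeff_def by (rule cSup_least) (use assms in \<open>auto simp: algebra_simps\<close>)

lemma trop_series_ge_of_canon_coeff:
  assumes ts: "trop_series \<alpha> \<beta> F" and z: "z \<in> {\<alpha>..\<beta>}"
    and y: "\<And>v. y \<le> canon_coeff \<alpha> \<beta> F v + z * of_int v"
  shows "y \<le> F z"
proof -
  obtain c where c: "\<And>z. z \<in> {\<alpha>..\<beta>} \<Longrightarrow> is_inf_int (F z) (\<lambda>v. c v + z * of_int v)"
    using ts unfolding trop_series_def by blast
  have le: "canon_coeff \<alpha> \<beta> F v \<le> c v" for v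
    by (rule canon_coeff_le) (use z c in \<open>auto simp: is_inf_int_def\<close>)
  have "y \<le> c v + z * of_int v" for v
    using y[of v] le[of v] by linarith
  then show ?thesis using c[OF z] by (auto simp: is_inf_int_def)
qed

lemma canon_coeff_ge_dist:
  assumes ts: "trop_series \<alpha> \<beta> F" and z: "z \<in> {\<alpha>..\<beta>}"
  shows "min (z - \<alpha>) (\<beta> - z) * \<bar>of_int v\<bar> \<le> canon_coeff \<alpha> \<beta> F v + z * of_int v"
proof -
  have F0: "F \<alpha> = 0" "F \<beta> = 0" using ts by (auto simp: trop_series_def)
  have "0 \<le> canon_coeff \<alpha> \<beta> F v + \<alpha> * of_int v" "0 \<le> canon_coeff \<alpha> \<beta> F v + \<beta> * of_int v"
    using trop_series_le_canon_coeff[OF ts, of \<alpha> v] trop_series_le_canon_coeff[OF ts, of \<beta> v] z F0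
    by auto
  moreover have "min (z - \<alpha>) (\<beta> - z) * \<bar>of_int v\<bar> \<le> (if 0 \<le> v then (z - \<alpha>) * of_int v else (\<beta> - z) * - of_int v)"
    using z by (auto intro: mult_right_mono)
  ultimately show ?thesis by (auto simp: algebra_simps split: if_splits)
qed

definition supporting_slope :: "real \<Rightarrow> real \<Rightarrow> (real \<Rightarrow> real) \<Rightarrow> real \<Rightarrow> int \<Rightarrow> bool" where
  "supporting_slope \<alpha> \<beta> F x v \<longleftrightarrow> (\<forall>z\<in>{\<alpha>..\<beta>}. F z \<le> F x + of_int v * (z - x))"

lemma supporting_slope_iff_canon_coeff:
  assumes ts: "trop_series \<alpha> \<beta> F" and x: "x \<in> {\<alpha>..\<beta>}"
  shows "supporting_slope \<alpha> \<beta> F x v \<longleftrightarrow> canon_coeff \<alpha> \<beta> F v = F x - x * of_int v"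
proof
  assume "supporting_slope \<alpha> \<beta> F x v"
  then have "canon_coeff \<alpha> \<beta> F v \<le> F x - x * of_int v"
    using x by (intro canon_coeff_le) (auto simp: supporting_slope_def algebra_simps)
  then show "canon_coeff \<alpha> \<beta> F v = F x - x * of_int v"
    using trop_series_le_canon_coeff[OF ts x, of v] by simp
next
  assume "canon_coeff \<alpha> \<beta> F v = F x - x * of_int v"
  then have "F z \<le> F x + of_int v * (z - x)" if "z \<in> {\<alpha>..\<beta>}" for z
    using trop_series_le_canon_coeff[OF ts that, of v] by (simp add: algebra_simps)
  then show "supporting_slope \<alpha> \<beta> F x v" by (simp add: supporting_slope_def)
qed

lemma supporting_slope_between:
  assumes "supporting_slope \<alpha> \<beta> F x l" "supporting_slope \<alpha> \<beta> F x r" "r \<le> s" "s \<le> l"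
  shows "supporting_slope \<alpha> \<beta> F x s"
  unfolding supporting_slope_def
proof
  fix z assume z: "z \<in> {\<alpha>..\<beta>}"
  show "F z \<le> F x + of_int s * (z - x)"
  proof (cases "z \<le> x")
    case True
    have "F z \<le> F x + of_int l * (z - x)" using assms(1) z by (auto simp: supporting_slope_def)
    also have "\<dots> \<le> F x + of_int s * (z - x)" using True assms(4) by (simp add: mult_right_mono_neg)
    finally show ?thesis .
  next
    case False
    have "F z \<le> F x + of_int r * (z - x)" using assms(2) z by (auto simp: supporting_slope_def)
    also have "\<dots> \<le> F x + of_int s * (z - x)" using False assms(3) by (simp add: mult_right_mono)
    finally show ?thesis .
  qed
qed

text \<open>Upper semicontinuity: F is an infimum of continuous functions.\<close>

lemma trop_series_limit_le:
  assumes ts: "trop_series \<alpha> \<beta> F" and x: "x \<in> {\<alpha>..\<beta>}"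
    and L: "L \<noteq> bot" "L \<le> nhds x" and lim: "(F \<longlongrightarrow> y) L"
    and dom: "\<forall>\<^sub>F z in L. z \<in> {\<alpha>..\<beta>}"
  shows "y \<le> F x"
proof (rule trop_series_ge_of_canon_coeff[OF ts x])
  fix v
  have "((\<lambda>z. canon_coeff \<alpha> \<beta> F v + z * of_int v) \<longlongrightarrow> canon_coeff \<alpha> \<beta> F v + x * of_int v) L"
    by (rule tendsto_mono[OF L(2)]) (intro tendsto_intros filterlim_ident)
  moreover have "\<forall>\<^sub>F z in L. F z \<le> canon_coeff \<alpha> \<beta> F v + z * of_int v"
    using dom by eventually_elim (rule trop_series_le_canon_coeff[OF ts])
  ultimately show "y \<le> canon_coeff \<alpha> \<beta> F v + x * of_int v"
    using L(1) lim by (intro tendsto_le) auto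
qed

lemma Inf_range_of_is_inf_int: "is_inf_int y g \<Longrightarrow> Inf (range g) = y"
  unfolding is_inf_int_def by (intro cInf_eq_non_empty) auto

section \<open>Local structure of tropical series\<close>

lemma eventually_Min_affine:
  fixes c m :: "'a \<Rightarrow> real" and V :: "'a set"
  defines "g z \<equiv> Min ((\<lambda>v. c v + z * m v) ` V)"
  assumes V: "finite V" and s: "s \<in> V" "c s + x * m s = g x"
  shows "\<forall>\<^sub>F z in nhds x. (\<forall>v\<in>V. c v + x * m v = g x \<longrightarrow> m s * (z - x) \<le> m v * (z - x))
           \<longrightarrow> g z = c s + z * m s"
proof -
  have "\<forall>\<^sub>F z in nhds x. \<forall>v\<in>V. c v + x * m v \<noteq> g x \<longrightarrow> c s + z * m s < c v + z * m v"
  proof (rule eventually_ball_finite[OF V], intro ballI)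
    fix v assume "v \<in> V"
    then have "g x \<le> c v + x * m v" using V by (simp add: g_def)
    moreover have "((\<lambda>z. c v + z * m v - (c s + z * m s)) \<longlongrightarrow> c v + x * m v - (c s + x * m s)) (nhds x)"
      by (intro tendsto_intros filterlim_ident)
    ultimately show "\<forall>\<^sub>F z in nhds x. c v + x * m v \<noteq> g x \<longrightarrow> c s + z * m s < c v + z * m v"
      using s(2) by (cases "c v + x * m v = g x") (auto dest: order_tendstoD(1)[of _ _ _ 0])
  qed
  then show ?thesis
  proof eventually_elim
    case (elim z)
    show ?case
    proof (intro impI order.antisym)
      show "g z \<le> c s + z * m s" using V s(1) by (simp add: g_def)
      assume active: "\<forall>v\<in>V. c v + x * m v = g x \<longrightarrow> m s * (z - x) \<le> m v * (z - x)"
      have "c s + z * m s \<le> c v + z * m v" if "v \<in> V" for v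
      proof (cases "c v + x * m v = g x")
        case True
        then show ?thesis using active that s(2) by (auto simp: algebra_simps)
      qed (use elim that in fastforce)
      then show "c s + z * m s \<le> g z" using V s(1) unfolding g_def by (intro Min.boundedI) auto
    qed
  qed
qed

lemma trop_series_eq_Min:
  assumes ts: "trop_series \<alpha> \<beta> F" and z: "z \<in> {\<alpha>..\<beta>}"
    and V: "finite V" "u \<in> V"
    and dominated: "\<And>v. v \<notin> V \<Longrightarrow> canon_coeff \<alpha> \<beta> F u + z * of_int u \<le> canon_coeff \<alpha> \<beta> F v + z * of_int v"
  shows "F z = Min ((\<lambda>v. canon_coeff \<alpha> \<beta> F v + z * of_int v) ` V)"
proof (rule order.antisym)
  let ?m = "Min ((\<lambda>v. canon_coeff \<alpha> \<beta> F v + z * of_int v) ` V)"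
  show "F z \<le> ?m"
    using V by (auto intro!: Min.boundedI trop_series_le_canon_coeff[OF ts z])
  have "?m \<le> canon_coeff \<alpha> \<beta> F v + z * of_int v" if "v \<in> V" for v
    using V that by (auto intro: Min_le)
  then have "?m \<le> canon_coeff \<alpha> \<beta> F v + z * of_int v" for v
    using V(2) dominated[of v] by (cases "v \<in> V") (auto intro: order_trans)
  then show "?m \<le> F z" by (rule trop_series_ge_of_canon_coeff[OF ts z])
qed

text \<open>Since F vanishes at both ends of \<Omega>, the canonical term of slope v is at least
  \<delta> \<bar>v\<bar> within \<delta> of x (canon_coeff_ge_dist), so for large \<bar>v\<bar> it exceeds the term of slope 0.\<close>

lemma trop_series_eventually_Min:
  assumes ts: "trop_series \<alpha> \<beta> F" and x: "\<alpha> < x" "x < \<beta>"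
  obtains V where "finite V" "V \<noteq> {}"
    "\<forall>\<^sub>F z in nhds x. F z = Min ((\<lambda>v. canon_coeff \<alpha> \<beta> F v + z * of_int v) ` V)"
proof
  define \<delta> where "\<delta> = min (x - \<alpha>) (\<beta> - x) / 2"
  define K where "K = canon_coeff \<alpha> \<beta> F 0"
  define N where "N = int (nat \<lceil>K / \<delta>\<rceil>)"
  define V where "V = {-N..N}"
  have \<delta>: "0 < \<delta>" using x by (simp add: \<delta>_def)
  show V: "finite V" by (simp add: V_def)
  have "0 \<in> V" by (simp add: V_def N_def)
  then show "V \<noteq> {}" by blast
  have "K / \<delta> \<le> of_int N" unfolding N_def by linarith
  then have KN: "K \<le> \<delta> * of_int N" using \<delta> by (simp add: pos_divide_le_eq mult.commute)
  have large: "K \<le> \<delta> * \<bar>of_int v\<bar>" if "v \<notin> V" for v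
  proof -
    have "of_int N \<le> \<bar>real_of_int v\<bar>" using that by (auto simp: V_def)
    then show ?thesis using KN \<delta> by (meson mult_left_mono less_imp_le order_trans)
  qed
  show "\<forall>\<^sub>F z in nhds x. F z = Min ((\<lambda>v. canon_coeff \<alpha> \<beta> F v + z * of_int v) ` V)"
    unfolding eventually_nhds_metric
  proof (intro exI conjI allI impI)
    fix z assume "dist z x < \<delta>"
    moreover have "\<delta> \<le> (x - \<alpha>) / 2" "\<delta> \<le> (\<beta> - x) / 2" by (auto simp: \<delta>_def)
    ultimately have z: "z \<in> {\<alpha>..\<beta>}" and "\<delta> \<le> min (z - \<alpha>) (\<beta> - z)"
      by (auto simp: dist_real_def abs_less_iff)
    then have "\<delta> * \<bar>of_int v\<bar> \<le> canon_coeff \<alpha> \<beta> F v + z * of_int v" for v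
      using canon_coeff_ge_dist[OF ts z, of v] by (meson abs_ge_zero mult_right_mono order_trans)
    then have "K \<le> canon_coeff \<alpha> \<beta> F v + z * of_int v" if "v \<notin> V" for v
      using large[OF that] by (meson order_trans)
    then show "F z = Min ((\<lambda>v. canon_coeff \<alpha> \<beta> F v + z * of_int v) ` V)"
      by (intro trop_series_eq_Min[OF ts z V \<open>0 \<in> V\<close>]) (simp add: K_def)
  qed (fact \<delta>)
qed

lemma trop_series_local_slopes:
  assumes ts: "trop_series \<alpha> \<beta> F" and x: "\<alpha> < x" "x < \<beta>"
  obtains l r :: int where "r \<le> l" "supporting_slope \<alpha> \<beta> F x l" "supporting_slope \<alpha> \<beta> F x r"
    "left_affine F x l" "right_affine F x r"
proof -
  let ?c = "canon_coeff \<alpha> \<beta> F"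
  obtain V where V: "finite V" "V \<noteq> {}"
    and ev: "\<forall>\<^sub>F z in nhds x. F z = Min ((\<lambda>v. ?c v + z * of_int v) ` V)"
    using trop_series_eventually_Min[OF ts x] by blast
  define S where "S = {v \<in> V. ?c v + x * of_int v = F x}"
  have Fx: "F x = Min ((\<lambda>v. ?c v + x * of_int v) ` V)"
    using ev by (rule eventually_nhds_x_imp_x)
  then have "F x \<in> (\<lambda>v. ?c v + x * of_int v) ` V" using V by simp
  then have S: "finite S" "S \<noteq> {}" using V by (auto simp: S_def)
  have xO: "x \<in> {\<alpha>..\<beta>}" using x by simp
  have supporting: "supporting_slope \<alpha> \<beta> F x v" if "v \<in> S" for v
    using that by (simp add: S_def supporting_slope_iff_canon_coeff[OF ts xO])
  have side: "\<forall>\<^sub>F z in nhds x. (\<forall>v\<in>S. of_int s * (z - x) \<le> of_int v * (z - x))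
                \<longrightarrow> F z = F x + of_int s * (z - x)" if s: "s \<in> S" for s
  proof -
    have "s \<in> V" "?c s + x * of_int s = Min ((\<lambda>v. ?c v + x * of_int v) ` V)"
      using s Fx by (auto simp: S_def)
    from eventually_Min_affine[OF V(1) this] ev show ?thesis
      by eventually_elim (use Fx s in \<open>auto simp: S_def algebra_simps\<close>)
  qed
  show ?thesis
  proof
    show "Min S \<le> Max S" using S by simp
    show "supporting_slope \<alpha> \<beta> F x (Max S)" "supporting_slope \<alpha> \<beta> F x (Min S)"
      using S by (simp_all add: supporting)
    show "left_affine F x (of_int (Max S))"
      using side[of "Max S"] S unfolding left_affine_def
      by (auto elim!: eventually_mono intro!: mult_right_mono_neg)
    show "right_affine F x (of_int (Min S))"
      using side[of "Min S"] S unfolding right_affine_def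
      by (auto elim!: eventually_mono intro!: mult_right_mono)
  qed
qed

lemma trop_series_nonsmooth_iff:
  assumes ts: "trop_series \<alpha> \<beta> F" and x: "\<alpha> < x" "x < \<beta>"
  shows "x \<in> nonsmooth \<alpha> \<beta> F \<longleftrightarrow> Mfun \<alpha> \<beta> F x \<noteq> 0"
proof -
  obtain l r :: int where "left_affine F x l" "right_affine F x r"
    using trop_series_local_slopes[OF ts x] by metis
  then show ?thesis
    using x Mfun_eq_slope_jump differentiable_iff_slopes_eq by (fastforce simp: nonsmooth_def)
qed

lemma ereal_add_indicators:
  "ereal (m + (- (if P then 1 else 0) - (if Q then 1 else 0) + (if R then 1 else 0) + (if S then 1 else 0)))
    = ereal m - (if P then 1 else 0) - (if Q then 1 else 0) + (if R then 1 else 0) + (if S then 1 else 0)"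
  by (cases P; cases Q; cases R; cases S) (simp_all add: one_ereal_def zero_ereal_def)

lemma Mfun_add_tent:
  assumes ts: "trop_series \<alpha> \<beta> F" and G: "\<And>z. z \<in> {\<alpha>..\<beta>} \<Longrightarrow> G z = F z + tent a b c z"
    and x: "x \<in> {\<alpha>..\<beta>}"
  shows "Mfun \<alpha> \<beta> G x = Mfun \<alpha> \<beta> F x - (if a = x then 1 else 0) - (if b = x then 1 else 0)
           + (if a + c = x then 1 else 0) + (if b - c = x then 1 else 0)"
proof (cases "x = \<alpha> \<or> x = \<beta>")
  case True
  then show ?thesis by (auto simp: Mfun_def)
next
  case False
  with x have x: "\<alpha> < x" "x < \<beta>" by auto
  obtain l r :: int where F: "left_affine F x (of_int l)" "right_affine F x (of_int r)"
    using trop_series_local_slopes[OF ts x] by metis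
  obtain tl tr where T: "left_affine (tent a b c) x tl" "right_affine (tent a b c) x tr"
    and jump: "tl - tr = - (if a = x then 1 else 0) - (if b = x then 1 else 0)
                 + (if a + c = x then 1 else 0) + (if b - c = x then 1 else 0)"
    by (rule tent_slope_jump)
  have "\<forall>\<^sub>F z in nhds x. z \<in> {\<alpha><..<\<beta>}" using x by (intro eventually_nhds_in_open) auto
  then have near: "\<forall>\<^sub>F z in nhds x. F z + tent a b c z = G z" by eventually_elim (simp add: G)
  have "Mfun \<alpha> \<beta> G x = ereal ((of_int l + tl) - (of_int r + tr))"
    using x left_affine_cong[OF near left_affine_add[OF F(1) T(1)]]
      right_affine_cong[OF near right_affine_add[OF F(2) T(2)]] by (rule Mfun_eq_slope_jump)
  also have "\<dots> = ereal ((of_int l - of_int r) + (tl - tr))" by (simp add: algebra_simps)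
  finally show ?thesis
    unfolding jump ereal_add_indicators Mfun_eq_slope_jump[OF x F] .
qed

lemma nonsmooth_add_tent_subset:
  assumes ts: "trop_series \<alpha> \<beta> F" "trop_series \<alpha> \<beta> G"
    and G: "\<And>z. z \<in> {\<alpha>..\<beta>} \<Longrightarrow> G z = F z + tent a b c z"
  shows "nonsmooth \<alpha> \<beta> G \<subseteq> nonsmooth \<alpha> \<beta> F \<union> {a, b, a + c, b - c}"
proof
  fix x assume x: "x \<in> nonsmooth \<alpha> \<beta> G"
  then have x_in: "\<alpha> < x" "x < \<beta>" by (auto simp: nonsmooth_def)
  show "x \<in> nonsmooth \<alpha> \<beta> F \<union> {a, b, a + c, b - c}"
  proof (rule ccontr)
    assume nx: "x \<notin> nonsmooth \<alpha> \<beta> F \<union> {a, b, a + c, b - c}"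
    then have "a \<noteq> x" "b \<noteq> x" "a + c \<noteq> x" "b - c \<noteq> x" by auto
    then have "Mfun \<alpha> \<beta> G x = Mfun \<alpha> \<beta> F x" using Mfun_add_tent[OF ts(1) G, of x] x_in by simp
    moreover have "Mfun \<alpha> \<beta> F x = 0" using nx trop_series_nonsmooth_iff[OF ts(1) x_in] by simp
    ultimately show False using x trop_series_nonsmooth_iff[OF ts(2) x_in] by simp
  qed
qed

section \<open>Affine pieces between kinks\<close>

lemma eventually_has_derivative_of_locally_affine:
  assumes "\<forall>\<^sub>F z in nhds x. f z = f x + s * (z - x)"
  shows "\<forall>\<^sub>F y in nhds x. (f has_real_derivative s) (at y)"
proof -
  obtain S where S: "open S" "x \<in> S" "\<And>z. z \<in> S \<Longrightarrow> f z = f x + s * (z - x)"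
    using assms unfolding eventually_nhds by blast
  have "(f has_real_derivative s) (at y)" if "y \<in> S" for y
  proof (rule has_field_derivative_transform_within_open[OF _ S(1) that])
    show "((\<lambda>z. f x + s * (z - x)) has_real_derivative s) (at y)"
      by (auto intro!: derivative_eq_intros)
  qed (simp add: S(3))
  then show ?thesis using eventually_nhds_in_open[OF S(1,2)] by (auto elim: eventually_mono)
qed

lemma affine_on_Ioo_of_locally_affine:
  fixes f :: "real \<Rightarrow> real"
  assumes loc: "\<And>y. y \<in> {a<..<b} \<Longrightarrow> \<exists>s. \<forall>\<^sub>F z in nhds y. f z = f y + s * (z - y)"
    and p: "p \<in> {a<..<b}" and w: "(f has_real_derivative w) (at p)" and x: "x \<in> {a<..<b}"
  shows "f x = f p + w * (x - p)"
proof -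
  have deriv_near: "\<forall>\<^sub>F y' in nhds y. (f has_real_derivative deriv f y) (at y') \<and> deriv f y' = deriv f y"
    if y: "y \<in> {a<..<b}" for y
  proof -
    obtain s where "\<forall>\<^sub>F y' in nhds y. (f has_real_derivative s) (at y')"
      using loc[OF y] eventually_has_derivative_of_locally_affine by blast
    moreover from this have "deriv f y = s" by (auto dest: eventually_nhds_x_imp_x DERIV_imp_deriv)
    ultimately show ?thesis by (auto elim: eventually_mono intro: DERIV_imp_deriv)
  qed
  have "deriv f y = deriv f p" if "y \<in> {a<..<b}" for y
  proof (rule connected_local_const[OF connected_Ioo that p, rule_format])
    fix y' assume "y' \<in> {a<..<b}"
    have "\<forall>\<^sub>F y'' in nhds y'. deriv f y' = deriv f y''"
      using deriv_near[OF \<open>y' \<in> _\<close>] by (auto elim: eventually_mono)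
    then show "\<forall>\<^sub>F y'' in at y' within {a<..<b}. deriv f y' = deriv f y''"
      by (rule filter_leD[OF at_within_le_nhds])
  qed
  then have "deriv f y = w" if "y \<in> {a<..<b}" for y
    using that DERIV_imp_deriv[OF w] by simp
  then have fw: "(f has_real_derivative w) (at y)" if "y \<in> {a<..<b}" for y
    using eventually_nhds_x_imp_x[OF deriv_near[OF that]] that by simp
  have "((\<lambda>z. f z - w * z) has_real_derivative 0) (at y within {a<..<b})"
    if "y \<in> {a<..<b}" for y
    using DERIV_diff[OF fw[OF that] DERIV_cmult_Id[of w]] by (simp add: has_field_derivative_at_within)
  then obtain k where "\<And>y. y \<in> {a<..<b} \<Longrightarrow> f y - w * y = k"
    using has_field_derivative_zero_constant[of "{a<..<b}"] by (metis convex_real_interval(8))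
  from this[OF x] this[OF p] show ?thesis by (simp add: algebra_simps)
qed

lemma trop_series_affine_on_closure:
  assumes ts: "trop_series \<alpha> \<beta> F" and ab: "\<alpha> \<le> a" "a < b" "b \<le> \<beta>"
    and supp: "supporting_slope \<alpha> \<beta> F p w"
    and aff: "\<And>z. z \<in> {a<..<b} \<Longrightarrow> F z = F p + of_int w * (z - p)"
  shows "z \<in> {a..b} \<Longrightarrow> F z = F p + of_int w * (z - p)"
proof -
  have endpoint: "F e = F p + of_int w * (e - p)"
    if e: "e \<in> {\<alpha>..\<beta>}" and L: "L \<noteq> bot" "L \<le> nhds e" and ev: "\<forall>\<^sub>F z in L. z \<in> {a<..<b}" for e L
  proof (rule order.antisym)
    show "F e \<le> F p + of_int w * (e - p)" using supp e by (simp add: supporting_slope_def)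
    have "((\<lambda>z. F p + of_int w * (z - p)) \<longlongrightarrow> F p + of_int w * (e - p)) L"
      by (rule tendsto_mono[OF L(2)]) (intro tendsto_intros filterlim_ident)
    then have "(F \<longlongrightarrow> F p + of_int w * (e - p)) L"
      by (rule Lim_transform_eventually) (use ev aff in \<open>auto elim: eventually_mono\<close>)
    then show "F p + of_int w * (e - p) \<le> F e"
      by (rule trop_series_limit_le[OF ts e L]) (use ev ab in \<open>auto elim: eventually_mono\<close>)
  qed
  have "F a = F p + of_int w * (a - p)"
    using ab by (intro endpoint[of _ "at_right a"] eventually_at_right_real at_within_le_nhds) auto
  moreover have "F b = F p + of_int w * (b - p)"
    using ab by (intro endpoint[of _ "at_left b"] eventually_at_left_real at_within_le_nhds) auto
  ultimately show "z \<in> {a..b} \<Longrightarrow> F z = F p + of_int w * (z - p)"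
    using aff by (cases "z = a \<or> z = b") auto
qed

lemma trop_series_smooth_point:
  assumes ts: "trop_series \<alpha> \<beta> F" and x: "\<alpha> < x" "x < \<beta>" "x \<notin> nonsmooth \<alpha> \<beta> F"
  obtains w :: int where "supporting_slope \<alpha> \<beta> F x w"
    "\<forall>\<^sub>F z in nhds x. F z = F x + of_int w * (z - x)"
proof -
  obtain l r :: int where lr: "supporting_slope \<alpha> \<beta> F x l"
    "left_affine F x (of_int l)" "right_affine F x (of_int r)"
    using trop_series_local_slopes[OF ts x(1,2)] by metis
  have "l = r"
    using x differentiable_iff_slopes_eq[OF lr(2,3)] by (simp add: nonsmooth_def)
  then show ?thesis
    using that lr by (simp add: affine_iff_left_right_affine)
qed

lemma trop_series_affine_between_kinks:
  assumes ts: "trop_series \<alpha> \<beta> F" and ab: "\<alpha> \<le> a" "a < b" "b \<le> \<beta>"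
    and smooth: "{a<..<b} \<inter> nonsmooth \<alpha> \<beta> F = {}"
  obtains w :: int where "supporting_slope \<alpha> \<beta> F a w"
    "\<And>z. z \<in> {a..b} \<Longrightarrow> F z = F a + of_int w * (z - a)"
proof -
  have loc: "\<exists>w::int. supporting_slope \<alpha> \<beta> F x w \<and> (\<forall>\<^sub>F z in nhds x. F z = F x + of_int w * (z - x))"
    if "x \<in> {a<..<b}" for x
    using trop_series_smooth_point[OF ts, of x] that ab smooth by fastforce
  define p where "p = (a + b) / 2"
  have p: "p \<in> {a<..<b}" using ab by (simp add: p_def)
  then obtain w :: int where supp: "supporting_slope \<alpha> \<beta> F p w"
    and near_p: "\<forall>\<^sub>F z in nhds p. F z = F p + of_int w * (z - p)"
    using loc by blast
  have "F z = F p + of_int w * (z - p)" if "z \<in> {a<..<b}" for z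
    using affine_on_Ioo_of_locally_affine[OF _ p has_derivative_of_locally_affine[OF near_p] that] loc
    by blast
  then have aff: "F z = F p + of_int w * (z - p)" if "z \<in> {a..b}" for z
    using trop_series_affine_on_closure[OF ts ab supp] that by blast
  show ?thesis
  proof
    show "F z = F a + of_int w * (z - a)" if "z \<in> {a..b}" for z
      using aff[OF that] aff[of a] ab by (simp add: algebra_simps)
    have "F p + of_int w * (z - p) = F a + of_int w * (z - a)" for z
      using aff[of a] ab by (simp add: algebra_simps)
    then show "supporting_slope \<alpha> \<beta> F a w"
      using supp by (simp add: supporting_slope_def)
  qed
qed

lemma supporting_slope_succ_at_kink:
  assumes ts: "trop_series \<alpha> \<beta> F" and x: "\<alpha> < x" "x < \<beta>" "x \<in> nonsmooth \<alpha> \<beta> F"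
    and w: "right_affine F x (of_int w)"
  shows "supporting_slope \<alpha> \<beta> F x (w + 1)"
proof -
  obtain l r :: int where lr: "r \<le> l" "supporting_slope \<alpha> \<beta> F x l" "supporting_slope \<alpha> \<beta> F x r"
    "left_affine F x (of_int l)" "right_affine F x (of_int r)"
    using trop_series_local_slopes[OF ts x(1,2)] by metis
  have "r = w" using right_affine_unique[OF lr(5) w] by simp
  moreover have "l \<noteq> r"
    using x(3) differentiable_iff_slopes_eq[OF lr(4,5)] by (simp add: nonsmooth_def)
  ultimately have "r \<le> w + 1" "w + 1 \<le> l" using lr(1) by linarith+
  then show ?thesis by (rule supporting_slope_between[OF lr(2,3)])
qed

lemma supporting_slope_pred_at_kink:
  assumes ts: "trop_series \<alpha> \<beta> F" and x: "\<alpha> < x" "x < \<beta>" "x \<in> nonsmooth \<alpha> \<beta> F"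
    and w: "left_affine F x (of_int w)"
  shows "supporting_slope \<alpha> \<beta> F x (w - 1)"
proof -
  obtain l r :: int where lr: "r \<le> l" "supporting_slope \<alpha> \<beta> F x l" "supporting_slope \<alpha> \<beta> F x r"
    "left_affine F x (of_int l)" "right_affine F x (of_int r)"
    using trop_series_local_slopes[OF ts x(1,2)] by metis
  have "l = w" using left_affine_unique[OF lr(4) w] by simp
  moreover have "l \<noteq> r"
    using x(3) differentiable_iff_slopes_eq[OF lr(4,5)] by (simp add: nonsmooth_def)
  ultimately have "r \<le> w - 1" "w - 1 \<le> l" using lr(1) by linarith+
  then show ?thesis by (rule supporting_slope_between[OF lr(2,3)])
qed

lemma supporting_slope_succ_at_left_end:
  assumes ts: "trop_series \<alpha> \<beta> F" and a: "a \<in> nonsmooth \<alpha> \<beta> F \<union> {\<alpha>}" and "a < b"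
    and supp: "supporting_slope \<alpha> \<beta> F a w"
    and aff: "\<And>z. z \<in> {a..b} \<Longrightarrow> F z = F a + of_int w * (z - a)"
  shows "supporting_slope \<alpha> \<beta> F a (w + 1)"
proof (cases "a = \<alpha>")
  case True
  have "F z \<le> F a + of_int (w + 1) * (z - a)" if "z \<in> {\<alpha>..\<beta>}" for z
  proof -
    have "F z \<le> F a + of_int w * (z - a)" using supp that by (simp add: supporting_slope_def)
    then show ?thesis using True that by (simp add: algebra_simps)
  qed
  then show ?thesis by (simp add: supporting_slope_def)
next
  case False
  with a have a: "a \<in> nonsmooth \<alpha> \<beta> F" "\<alpha> < a" "a < \<beta>" by (auto simp: nonsmooth_def)
  have "\<forall>\<^sub>F z in nhds a. z < b" using \<open>a < b\<close> by (intro eventually_nhds_in_open[of "{..<b}", simplified]) auto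
  then have "right_affine F a (of_int w)"
    unfolding right_affine_def
  proof eventually_elim
    case (elim z)
    then show ?case using aff[of z] by simp
  qed
  then show ?thesis using supporting_slope_succ_at_kink[OF ts a(2,3,1)] by blast
qed

lemma supporting_slope_pred_at_right_end:
  assumes ts: "trop_series \<alpha> \<beta> F" and b: "b \<in> nonsmooth \<alpha> \<beta> F \<union> {\<beta>}" and "a < b"
    and supp: "supporting_slope \<alpha> \<beta> F a w"
    and aff: "\<And>z. z \<in> {a..b} \<Longrightarrow> F z = F a + of_int w * (z - a)"
  shows "supporting_slope \<alpha> \<beta> F b (w - 1)"
proof -
  have line: "F a + of_int w * (z - a) = F b + of_int w * (z - b)" for z
    using aff[of b] \<open>a < b\<close> by (simp add: algebra_simps)
  show ?thesis
  proof (cases "b = \<beta>")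
    case True
    have "F z \<le> F b + of_int (w - 1) * (z - b)" if "z \<in> {\<alpha>..\<beta>}" for z
    proof -
      have "F z \<le> F b + of_int w * (z - b)" using supp that line by (simp add: supporting_slope_def)
      then show ?thesis using True that by (simp add: algebra_simps)
    qed
    then show ?thesis by (simp add: supporting_slope_def)
  next
    case False
    with b have b: "b \<in> nonsmooth \<alpha> \<beta> F" "\<alpha> < b" "b < \<beta>" by (auto simp: nonsmooth_def)
    have "\<forall>\<^sub>F z in nhds b. a < z" using \<open>a < b\<close> by (intro eventually_nhds_in_open[of "{a<..}", simplified]) auto
    then have "left_affine F b (of_int w)"
      unfolding left_affine_def
    proof eventually_elim
      case (elim z)
      then show ?case using aff[of z] line[of z] by auto
    qed
    then show ?thesis using supporting_slope_pred_at_kink[OF ts b(2,3,1)] by blast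
  qed
qed

section \<open>The operator on an affine piece\<close>

locale affine_piece =
  fixes \<alpha> \<beta> :: real and F :: "real \<Rightarrow> real" and a b :: real and w :: int
  assumes trop_series: "trop_series \<alpha> \<beta> F"
    and bounds: "\<alpha> \<le> a" "a < b" "b \<le> \<beta>"
    and affine: "\<And>z. z \<in> {a..b} \<Longrightarrow> F z = F a + of_int w * (z - a)"
    and supporting_succ: "supporting_slope \<alpha> \<beta> F a (w + 1)"
    and supporting_pred: "supporting_slope \<alpha> \<beta> F b (w - 1)"
begin

lemma F_b: "F b = F a + of_int w * (b - a)"
  using affine[of b] bounds by simp

lemma supporting_at_a: "supporting_slope \<alpha> \<beta> F a w"
  unfolding supporting_slope_def
proof
  fix z assume z: "z \<in> {\<alpha>..\<beta>}"
  consider "z < a" | "z \<in> {a..b}" | "b < z" by force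
  then show "F z \<le> F a + of_int w * (z - a)"
  proof cases
    case 1
    have "F z \<le> F a + of_int (w + 1) * (z - a)" using supporting_succ z by (simp add: supporting_slope_def)
    then show ?thesis using 1 by (simp add: algebra_simps)
  next
    case 3
    have "F z \<le> F b + of_int (w - 1) * (z - b)" using supporting_pred z by (simp add: supporting_slope_def)
    then show ?thesis using 3 F_b by (simp add: algebra_simps)
  qed (use affine[of z] in simp)
qed

lemma canon_coeff_at_a: "supporting_slope \<alpha> \<beta> F a v \<Longrightarrow> canon_coeff \<alpha> \<beta> F v = F a - a * of_int v"
  and canon_coeff_at_b: "supporting_slope \<alpha> \<beta> F b v \<Longrightarrow> canon_coeff \<alpha> \<beta> F v = F b - b * of_int v"
  using supporting_slope_iff_canon_coeff[OF trop_series, of a] supporting_slope_iff_canon_coeff[OF trop_series, of b]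
    bounds by auto

lemma canon_coeff_slope: "canon_coeff \<alpha> \<beta> F w + z * of_int w = F a + of_int w * (z - a)"
  and canon_coeff_succ: "canon_coeff \<alpha> \<beta> F (w + 1) + z * of_int (w + 1) = F a + of_int (w + 1) * (z - a)"
  and canon_coeff_pred: "canon_coeff \<alpha> \<beta> F (w - 1) + z * of_int (w - 1) = F b + of_int (w - 1) * (z - b)"
  by (simp_all only: canon_coeff_at_a[OF supporting_at_a] canon_coeff_at_a[OF supporting_succ]
      canon_coeff_at_b[OF supporting_pred]) (simp_all add: algebra_simps)

lemma canon_coeff_other_slope:
  assumes u: "u \<noteq> w" and z: "z \<in> {a..b}"
  shows "F z + min (z - a) (b - z) \<le> canon_coeff \<alpha> \<beta> F u + z * of_int u"
proof (cases "w < u")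
  case True
  have "F z + (z - a) = F a + of_int (w + 1) * (z - a)" using affine[OF z] by (simp add: algebra_simps)
  also have "\<dots> \<le> F a + of_int u * (z - a)" using True z by (intro add_left_mono mult_right_mono) auto
  also have "\<dots> \<le> canon_coeff \<alpha> \<beta> F u + z * of_int u"
    using trop_series_le_canon_coeff[OF trop_series, of a u] bounds by (simp add: algebra_simps)
  finally show ?thesis using min.cobounded1[of "z - a" "b - z"] by linarith
next
  case False
  have "F z + (b - z) = F b + of_int (w - 1) * (z - b)" using affine[OF z] F_b by (simp add: algebra_simps)
  also have "\<dots> \<le> F b + of_int u * (z - b)" using False u z by (intro add_left_mono mult_right_mono_neg) auto
  also have "\<dots> \<le> canon_coeff \<alpha> \<beta> F u + z * of_int u"
    using trop_series_le_canon_coeff[OF trop_series, of b u] bounds by (simp add: algebra_simps)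
  finally show ?thesis using min.cobounded2[of "z - a" "b - z"] by linarith
qed

lemma add_tent_le_raised_term:
  assumes c: "0 \<le> c" "2 * c \<le> b - a" and z: "z \<in> {\<alpha>..\<beta>}"
  shows "F z + tent a b c z \<le> canon_coeff \<alpha> \<beta> F v + (if v = w then c else 0) + z * of_int v"
proof (cases "z \<in> {a..b}")
  case True
  then have tent: "tent a b c z = min (min (z - a) (b - z)) c" using c by (simp add: tent_eq_min)
  show ?thesis
  proof (cases "v = w")
    case True
    then show ?thesis using tent canon_coeff_slope[of z] affine[OF \<open>z \<in> {a..b}\<close>] by simp
  next
    case False
    then show ?thesis using tent canon_coeff_other_slope[OF False \<open>z \<in> {a..b}\<close>] by simp
  qed
next
  case False
  then have "tent a b c z = 0" using c by (intro tent_outside) auto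
  then show ?thesis using trop_series_le_canon_coeff[OF trop_series z, of v] c by auto
qed

lemma le_add_tent:
  assumes c: "0 \<le> c" "2 * c \<le> b - a" and z: "z \<in> {\<alpha>..\<beta>}"
    and y: "\<And>v. y \<le> canon_coeff \<alpha> \<beta> F v + (if v = w then c else 0) + z * of_int v"
  shows "y \<le> F z + tent a b c z"
proof -
  have y_succ: "y \<le> F a + of_int (w + 1) * (z - a)"
    using y[of "w + 1"] canon_coeff_succ[of z] by simp
  have y_pred: "y \<le> F b + of_int (w - 1) * (z - b)"
    using y[of "w - 1"] canon_coeff_pred[of z] by simp
  have y_slope: "y \<le> F a + of_int w * (z - a) + c"
    using y[of w] canon_coeff_slope[of z] by simp
  show ?thesis
  proof (cases "z \<in> {a..b}")
    case True
    then have "tent a b c z = min (min (z - a) (b - z)) c" using c by (simp add: tent_eq_min)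
    moreover have "F z = F a + of_int w * (z - a)" using affine[OF True] .
    ultimately show ?thesis using y_succ y_pred y_slope F_b by (simp add: algebra_simps)
  next
    case False
    have "y \<le> F a + of_int w * (z - a)"
    proof (cases "z < a")
      case True
      then show ?thesis using y_succ by (simp add: algebra_simps)
    next
      case False
      then have "b < z" using \<open>z \<notin> {a..b}\<close> by simp
      then show ?thesis using y_pred F_b by (simp add: algebra_simps)
    qed
    then have "y \<le> canon_coeff \<alpha> \<beta> F v + z * of_int v" for v
      using y[of v] canon_coeff_slope[of z] by (cases "v = w") simp_all
    then have "y \<le> F z" by (rule trop_series_ge_of_canon_coeff[OF trop_series z])
    moreover have "tent a b c z = 0" using False c by (intro tent_outside) auto
    ultimately show ?thesis by simp
  qed
qed

lemma is_inf_tent: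
  assumes "0 \<le> c" "2 * c \<le> b - a" "z \<in> {\<alpha>..\<beta>}"
  shows "is_inf_int (F z + tent a b c z)
           (\<lambda>v. canon_coeff \<alpha> \<beta> F v + (if v = w then c else 0) + z * of_int v)"
  unfolding is_inf_int_def using add_tent_le_raised_term[OF assms] le_add_tent[OF assms] by blast

lemma Inf_other_slopes:
  assumes p: "p \<in> {a<..<b}"
  shows "Inf ((\<lambda>u. canon_coeff \<alpha> \<beta> F u + p * of_int u) ` (UNIV - {w})) = F p + min (p - a) (b - p)"
proof (rule cInf_eq_non_empty)
  have "w + 1 \<in> UNIV - {w}" by simp
  then show "(\<lambda>u. canon_coeff \<alpha> \<beta> F u + p * of_int u) ` (UNIV - {w}) \<noteq> {}" by blast
  show "F p + min (p - a) (b - p) \<le> t" if "t \<in> (\<lambda>u. canon_coeff \<alpha> \<beta> F u + p * of_int u) ` (UNIV - {w})" for t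
    using that canon_coeff_other_slope[of _ p] p by auto
  fix y assume y: "\<And>t. t \<in> (\<lambda>u. canon_coeff \<alpha> \<beta> F u + p * of_int u) ` (UNIV - {w}) \<Longrightarrow> y \<le> t"
  have "y \<le> canon_coeff \<alpha> \<beta> F (w + 1) + p * of_int (w + 1)"
    by (rule y, rule image_eqI[where x = "w + 1"]) auto
  moreover have "y \<le> canon_coeff \<alpha> \<beta> F (w - 1) + p * of_int (w - 1)"
    by (rule y, rule image_eqI[where x = "w - 1"]) auto
  moreover have "F p = F a + of_int w * (p - a)" using p affine[of p] by simp
  ultimately show "y \<le> F p + min (p - a) (b - p)"
    using F_b canon_coeff_succ[of p] canon_coeff_pred[of p] by (simp add: algebra_simps)
qed

lemma Gop_eq_add_tent:
  assumes p: "p \<in> {a<..<b}" and z: "z \<in> {\<alpha>..\<beta>}"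
  shows "Gop \<alpha> \<beta> p F z = F z + tent a b (min (p - a) (b - p)) z"
proof -
  define c where "c = min (p - a) (b - p)"
  let ?local = "\<lambda>v. \<exists>\<epsilon>>0. \<forall>z. \<bar>z - p\<bar> < \<epsilon> \<longrightarrow> F z = canon_coeff \<alpha> \<beta> F v + z * of_int v"
  have local_iff: "?local v \<longleftrightarrow> (\<forall>\<^sub>F z in nhds p. F z = canon_coeff \<alpha> \<beta> F v + z * of_int v)" for v
    by (simp add: eventually_nhds_metric dist_real_def)
  have "\<forall>\<^sub>F z in nhds p. z \<in> {a<..<b}" using p by (intro eventually_nhds_in_open) auto
  then have "\<forall>\<^sub>F z in nhds p. F z = canon_coeff \<alpha> \<beta> F w + z * of_int w"
  proof eventually_elim
    case (elim z)
    then show ?case using affine[of z] canon_coeff_slope[of z] by simp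
  qed
  then have deriv: "(F has_real_derivative of_int w) (at p)" and "?local w"
    by (simp_all add: local_iff has_derivative_of_eventually_affine)
  then have slope: "(THE v. ?local v) = w"
    by (intro the_equality) (auto simp: local_iff dest!: has_derivative_of_eventually_affine DERIV_unique[OF deriv])
  have other: "Inf ((\<lambda>u. canon_coeff \<alpha> \<beta> F u + p * of_int u) ` (UNIV - {w})) - p * of_int w
      = canon_coeff \<alpha> \<beta> F w + c"
    using Inf_other_slopes[OF p] canon_coeff_slope[of p] affine[of p] p by (simp add: c_def algebra_simps)
  have "F differentiable (at p)" using deriv by (auto simp: real_differentiable_def)
  then have "Gop \<alpha> \<beta> p F z = Inf (range (\<lambda>v. (if v = w
      then Inf ((\<lambda>u. canon_coeff \<alpha> \<beta> F u + p * of_int u) ` (UNIV - {w})) - p * of_int w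
      else canon_coeff \<alpha> \<beta> F v) + z * of_int v))"
    unfolding Gop_def Let_def slope by simp
  also have "\<dots> = Inf (range (\<lambda>v. canon_coeff \<alpha> \<beta> F v + (if v = w then c else 0) + z * of_int v))"
    unfolding other by (intro arg_cong[where f = Inf] image_cong) auto
  also have "\<dots> = F z + tent a b c z"
    using p z by (intro Inf_range_of_is_inf_int is_inf_tent) (auto simp: c_def min_def)
  finally show ?thesis by (simp add: c_def)
qed

lemma trop_series_Gop:
  assumes p: "p \<in> {a<..<b}"
  shows "trop_series \<alpha> \<beta> (Gop \<alpha> \<beta> p F)"
proof -
  define c where "c = min (p - a) (b - p)"
  have c: "0 \<le> c" "2 * c \<le> b - a" using p by (auto simp: c_def min_def)
  have G: "Gop \<alpha> \<beta> p F z = F z + tent a b c z" if "z \<in> {\<alpha>..\<beta>}" for z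
    using Gop_eq_add_tent[OF p that] by (simp add: c_def)
  have F: "\<forall>z\<in>{\<alpha>..\<beta>}. 0 \<le> F z" "F \<alpha> = 0" "F \<beta> = 0"
    using trop_series by (auto simp: trop_series_def)
  show ?thesis
    unfolding trop_series_def
  proof (intro conjI ballI exI)
    show "0 \<le> Gop \<alpha> \<beta> p F z" if "z \<in> {\<alpha>..\<beta>}" for z
      using G[OF that] F(1) that tent_nonneg[OF c] by (simp add: add_nonneg_nonneg)
    show "Gop \<alpha> \<beta> p F \<alpha> = 0" "Gop \<alpha> \<beta> p F \<beta> = 0"
      using G[of \<alpha>] G[of \<beta>] F(2,3) tent_outside[OF c] bounds by auto
    show "is_inf_int (Gop \<alpha> \<beta> p F z)
        (\<lambda>v. canon_coeff \<alpha> \<beta> F v + (if v = w then c else 0) + z * of_int v)" if "z \<in> {\<alpha>..\<beta>}" for z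
      using G[OF that] is_inf_tent[OF c that] by simp
  qed
qed

end

lemma affine_piece_at_smooth_component:
  assumes ts: "trop_series \<alpha> \<beta> F" and "a < b"
    and a: "a \<in> nonsmooth \<alpha> \<beta> F \<union> {\<alpha>}" and b: "b \<in> nonsmooth \<alpha> \<beta> F \<union> {\<beta>}"
    and smooth: "{a<..<b} \<inter> nonsmooth \<alpha> \<beta> F = {}"
  obtains w where "affine_piece \<alpha> \<beta> F a b w"
proof -
  have ab: "\<alpha> \<le> a" "a < b" "b \<le> \<beta>" using a b \<open>a < b\<close> by (auto simp: nonsmooth_def)
  obtain w where supp: "supporting_slope \<alpha> \<beta> F a w"
    and aff: "\<And>z. z \<in> {a..b} \<Longrightarrow> F z = F a + of_int w * (z - a)"
    using trop_series_affine_between_kinks[OF ts ab smooth] by blast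
  show ?thesis
    using that affine_piece.intro[OF ts ab aff supporting_slope_succ_at_left_end[OF ts a ab(2) supp aff]
        supporting_slope_pred_at_right_end[OF ts b ab(2) supp aff]] .
qed

theorem mainTheorem3:
  fixes \<alpha> \<beta> p a b :: real and F :: "real \<Rightarrow> real"
  assumes "\<alpha> < \<beta>"
    and "trop_poly \<alpha> \<beta> F"
    and "p \<in> {\<alpha><..<\<beta>}" and "p \<notin> nonsmooth \<alpha> \<beta> F"
    and "a < p" and "p < b"
    and "a \<in> nonsmooth \<alpha> \<beta> F \<union> {\<alpha>}" and "b \<in> nonsmooth \<alpha> \<beta> F \<union> {\<beta>}"
    and "{a<..<b} \<inter> nonsmooth \<alpha> \<beta> F = {}"
  defines "c \<equiv> min (p - a) (b - p)"
  shows "trop_poly \<alpha> \<beta> (Gop \<alpha> \<beta> p F) \<and>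
         (\<forall>x\<in>{\<alpha>..\<beta>}. Mfun \<alpha> \<beta> (Gop \<alpha> \<beta> p F) x =
            Mfun \<alpha> \<beta> F x - (if a = x then 1 else 0) - (if b = x then 1 else 0)
              + (if a + c = x then 1 else 0) + (if b - c = x then 1 else 0))"
proof -
  have ts: "trop_series \<alpha> \<beta> F" and fin: "finite (nonsmooth \<alpha> \<beta> F)"
    using assms(2) by (auto simp: trop_poly_def)
  have p: "p \<in> {a<..<b}" using assms(5,6) by simp
  obtain w where "affine_piece \<alpha> \<beta> F a b w"
    using affine_piece_at_smooth_component[OF ts _ assms(7-9)] assms(5,6) by force
  then interpret affine_piece \<alpha> \<beta> F a b w .
  have G: "\<And>z. z \<in> {\<alpha>..\<beta>} \<Longrightarrow> Gop \<alpha> \<beta> p F z = F z + tent a b c z"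
    unfolding c_def by (rule Gop_eq_add_tent[OF p])
  have "nonsmooth \<alpha> \<beta> (Gop \<alpha> \<beta> p F) \<subseteq> nonsmooth \<alpha> \<beta> F \<union> {a, b, a + c, b - c}"
    by (rule nonsmooth_add_tent_subset[OF ts trop_series_Gop[OF p] G])
  then have "finite (nonsmooth \<alpha> \<beta> (Gop \<alpha> \<beta> p F))"
    by (rule finite_subset) (simp add: fin)
  then show ?thesis
    using trop_series_Gop[OF p] Mfun_add_tent[OF ts G] by (simp add: trop_poly_def)
qed

end
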